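(* Let $p$ be a prime, $V$ a finite-dimensional $\mathbb{F}_p$-vector space, $K \subseteq \mathcal{A}(V)$ a symplectic subspace, and $\beta: V \times V \to K^*$ a bilinear map with $\omega_K(v,w) = \beta(v,w)-\beta(w,v)$ for all $v,w\in V$. Then any two irreducible complex representations of $H = H(V,K,\beta)$ with the same nontrivial central character (i.e. on which the central subgroup $K^* = \{(0,t)\}$ acts by the same nontrivial character) are isomorphic.
   Context: For an $\mathbb{F}_p$-vector space $V$, $\mathcal{A}(V)$ is the space of alternating bilinear forms $V\times V \to \mathbb{F}_p$. A subspace $K\subseteq\mathcal{A}(V)$ is symplectic if every nonzero element of $K$ is non-degenerate. $\omega_K: V \times V \to K^*$ is defined by $\omega_K(v,w)(k) = k(v,w)$ for $k\in K$. The group $H(V,K,\beta)$ has underlying set $V \times K^*$ with multiplication $(v,t)(v',t') = (v+v', t+t'+\beta(v,v'))$ (a generalized Heisenberg group when $K$ is symplectic). *)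

theory Defs
  imports "HOL-Analysis.Analysis" "HOL-Algebra.Group"
begin

text \<open>The base field is an abstract field type 'f of prime cardinality p (i.e. F_p).
  V is the type 'v with a scalar multiplication sc making it an 'f-vector space.\<close>

definition fin_dim_vs :: "('f::field \<Rightarrow> 'v::ab_group_add \<Rightarrow> 'v) \<Rightarrow> bool" where
  "fin_dim_vs sc \<longleftrightarrow> Vector_Spaces.vector_space sc \<and>
     (\<exists>B. finite B \<and> module.span sc B = UNIV)"

definition bilinear_form :: "('f::field \<Rightarrow> 'v::ab_group_add \<Rightarrow> 'v) \<Rightarrow> ('v \<Rightarrow> 'v \<Rightarrow> 'f) \<Rightarrow> bool" where
  "bilinear_form sc b \<longleftrightarrow>
     (\<forall>x y z. b (x + y) z = b x z + b y z) \<and>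
     (\<forall>x y z. b x (y + z) = b x y + b x z) \<and>
     (\<forall>a x y. b (sc a x) y = a * b x y) \<and>
     (\<forall>a x y. b x (sc a y) = a * b x y)"

definition alt_forms :: "('f::field \<Rightarrow> 'v::ab_group_add \<Rightarrow> 'v) \<Rightarrow> ('v \<Rightarrow> 'v \<Rightarrow> 'f) set" where
  "alt_forms sc = {b. bilinear_form sc b \<and> (\<forall>v. b v v = 0)}"

definition forms_subspace :: "('v \<Rightarrow> 'v \<Rightarrow> 'f::field) set \<Rightarrow> bool" where
  "forms_subspace K \<longleftrightarrow> (\<lambda>v w. 0) \<in> K \<and>
     (\<forall>k\<in>K. \<forall>k'\<in>K. (\<lambda>v w. k v w + k' v w) \<in> K) \<and>
     (\<forall>a. \<forall>k\<in>K. (\<lambda>v w. a * k v w) \<in> K)"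

definition nondegenerate :: "('v::zero \<Rightarrow> 'v \<Rightarrow> 'f::zero) \<Rightarrow> bool" where
  "nondegenerate k \<longleftrightarrow> (\<forall>v. (\<forall>w. k v w = 0) \<longrightarrow> v = 0)"

definition symplectic :: "('v::zero \<Rightarrow> 'v \<Rightarrow> 'f::zero) set \<Rightarrow> bool" where
  "symplectic K \<longleftrightarrow> (\<forall>k\<in>K. k \<noteq> (\<lambda>v w. 0) \<longrightarrow> nondegenerate k)"

text \<open>K^*: linear functionals on K, represented extensionally (value 0 outside K).\<close>
definition Kdual :: "('v \<Rightarrow> 'v \<Rightarrow> 'f::field) set \<Rightarrow> (('v \<Rightarrow> 'v \<Rightarrow> 'f) \<Rightarrow> 'f) set" where
  "Kdual K = {t. (\<forall>k\<in>K. \<forall>k'\<in>K. t (\<lambda>v w. k v w + k' v w) = t k + t k') \<and>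
                 (\<forall>a. \<forall>k\<in>K. t (\<lambda>v w. a * k v w) = a * t k) \<and>
                 (\<forall>k. k \<notin> K \<longrightarrow> t k = 0)}"

definition omegaK :: "('v \<Rightarrow> 'v \<Rightarrow> 'f::zero) set \<Rightarrow> 'v \<Rightarrow> 'v \<Rightarrow> (('v \<Rightarrow> 'v \<Rightarrow> 'f) \<Rightarrow> 'f)" where
  "omegaK K v w = (\<lambda>k. if k \<in> K then k v w else 0)"

definition bilinear_to_dual ::
  "('f::field \<Rightarrow> 'v::ab_group_add \<Rightarrow> 'v) \<Rightarrow> ('v \<Rightarrow> 'v \<Rightarrow> 'f) set \<Rightarrow>
   ('v \<Rightarrow> 'v \<Rightarrow> (('v \<Rightarrow> 'v \<Rightarrow> 'f) \<Rightarrow> 'f)) \<Rightarrow> bool" where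
  "bilinear_to_dual sc K \<beta> \<longleftrightarrow>
     (\<forall>v w. \<beta> v w \<in> Kdual K) \<and>
     (\<forall>x y z. \<beta> (x + y) z = (\<lambda>k. \<beta> x z k + \<beta> y z k)) \<and>
     (\<forall>x y z. \<beta> x (y + z) = (\<lambda>k. \<beta> x y k + \<beta> x z k)) \<and>
     (\<forall>a x y. \<beta> (sc a x) y = (\<lambda>k. a * \<beta> x y k)) \<and>
     (\<forall>a x y. \<beta> x (sc a y) = (\<lambda>k. a * \<beta> x y k))"

definition heis ::
  "('v \<Rightarrow> 'v \<Rightarrow> 'f::field) set \<Rightarrow> ('v::ab_group_add \<Rightarrow> 'v \<Rightarrow> (('v \<Rightarrow> 'v \<Rightarrow> 'f) \<Rightarrow> 'f))
   \<Rightarrow> ('v \<times> (('v \<Rightarrow> 'v \<Rightarrow> 'f) \<Rightarrow> 'f)) monoid" where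
  "heis K \<beta> = \<lparr>carrier = UNIV \<times> Kdual K,
     mult = (\<lambda>(v, t) (v', t'). (v + v', \<lambda>k. t k + t' k + \<beta> v v' k)),
     one = (0, \<lambda>k. 0)\<rparr>"

definition representation :: "('g, 'b) monoid_scheme \<Rightarrow> ('g \<Rightarrow> complex^'n^'n) \<Rightarrow> bool" where
  "representation G \<rho> \<longleftrightarrow>
     (\<forall>g\<in>carrier G. invertible (\<rho> g)) \<and>
     (\<forall>g\<in>carrier G. \<forall>h\<in>carrier G. \<rho> (g \<otimes>\<^bsub>G\<^esub> h) = \<rho> g ** \<rho> h)"

text \<open>Irreducible: no complex-linear invariant subspaces other than 0 and the whole space
  (the representation space complex^'n is nonzero since types are nonempty).\<close>
definition irreducible_rep :: "('g, 'b) monoid_scheme \<Rightarrow> ('g \<Rightarrow> complex^'n^'n) \<Rightarrow> bool" where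
  "irreducible_rep G \<rho> \<longleftrightarrow> representation G \<rho> \<and>
     (\<forall>U. vec.subspace U \<and> (\<forall>g\<in>carrier G. \<forall>x\<in>U. \<rho> g *v x \<in> U)
          \<longrightarrow> U = {0} \<or> U = UNIV)"

definition isomorphic_reps ::
  "('g, 'b) monoid_scheme \<Rightarrow> ('g \<Rightarrow> complex^'n^'n) \<Rightarrow> ('g \<Rightarrow> complex^'m^'m) \<Rightarrow> bool" where
  "isomorphic_reps G \<rho> \<sigma> \<longleftrightarrow>
     (\<exists>(P::complex^'n^'m) (Q::complex^'m^'n). P ** Q = mat 1 \<and> Q ** P = mat 1 \<and>
        (\<forall>g\<in>carrier G. P ** \<rho> g = \<sigma> g ** P))"

definition dual_character ::
  "('v \<Rightarrow> 'v \<Rightarrow> 'f::field) set \<Rightarrow> ((('v \<Rightarrow> 'v \<Rightarrow> 'f) \<Rightarrow> 'f) \<Rightarrow> complex) \<Rightarrow> bool" where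
  "dual_character K \<xi> \<longleftrightarrow>
     (\<forall>t\<in>Kdual K. \<xi> t \<noteq> 0) \<and>
     (\<forall>t\<in>Kdual K. \<forall>s\<in>Kdual K. \<xi> (\<lambda>k. t k + s k) = \<xi> t * \<xi> s)"

definition nontrivial_dual_character ::
  "('v \<Rightarrow> 'v \<Rightarrow> 'f::field) set \<Rightarrow> ((('v \<Rightarrow> 'v \<Rightarrow> 'f) \<Rightarrow> 'f) \<Rightarrow> complex) \<Rightarrow> bool" where
  "nontrivial_dual_character K \<xi> \<longleftrightarrow> dual_character K \<xi> \<and> (\<exists>t\<in>Kdual K. \<xi> t \<noteq> 1)"

definition has_central_character ::
  "('v::zero \<Rightarrow> 'v \<Rightarrow> 'f::field) set \<Rightarrow> ('v \<times> (('v \<Rightarrow> 'v \<Rightarrow> 'f) \<Rightarrow> 'f) \<Rightarrow> complex^'n^'n)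
   \<Rightarrow> ((('v \<Rightarrow> 'v \<Rightarrow> 'f) \<Rightarrow> 'f) \<Rightarrow> complex) \<Rightarrow> bool" where
  "has_central_character K \<rho> \<xi> \<longleftrightarrow> (\<forall>t\<in>Kdual K. \<rho> (0, t) = mat (\<xi> t))"

end

theory Submission
  imports Defs "HOL-Library.Function_Algebras"
begin

text \<open>
  For \<open>v \<noteq> 0\<close> the map \<open>w \<mapsto> \<omega>\<^sub>K(v,w)\<close> sends \<open>V\<close> onto \<open>K\<^sup>*\<close>: its transpose
  \<open>k \<mapsto> k(v,\<cdot>)\<close> is injective because \<open>K\<close> is symplectic, and a counting argument over
  the finite field turns this into surjectivity. Choosing \<open>w\<close> with \<open>\<xi>(\<omega>\<^sub>K(v,w)) \<noteq> 1\<close>, the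
  elements \<open>(v,t)\<close> and \<open>(w,0)\<close> commute up to a central element on which \<xi> is nontrivial,
  so every representation with central character \<xi> has trace zero off the centre. Hence
  \<open>\<Sum>\<^sub>g tr \<sigma>(g) tr \<rho>(g\<^sup>-\<^sup>1) = |K\<^sup>*| dim \<rho> dim \<sigma> \<noteq> 0\<close>. For non-isomorphic irreducible
  \<rho> and \<sigma>, Schur's lemma kills every averaged intertwiner \<open>\<Sum>\<^sub>g \<sigma>(g) X \<rho>(g\<^sup>-\<^sup>1)\<close>, and taking
  for \<open>X\<close> the matrix units shows that the same sum is \<open>0\<close>.
\<close>

section \<open>Linear functionals on a finite vector space\<close>

definition lin_functionals :: "('f::field \<Rightarrow> 'a::ab_group_add \<Rightarrow> 'a) \<Rightarrow> 'a set \<Rightarrow> ('a \<Rightarrow> 'f) set" where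
  "lin_functionals scl U = {f. (\<forall>x\<in>U. \<forall>y\<in>U. f (x + y) = f x + f y) \<and>
     (\<forall>a. \<forall>x\<in>U. f (scl a x) = a * f x) \<and> (\<forall>x. x \<notin> U \<longrightarrow> f x = 0)}"

lemma lin_functionals_eq_if_eq_on_spanning:
  assumes vs: "vector_space scl" and U: "module.subspace scl U"
    and B: "B \<subseteq> U" "U \<subseteq> module.span scl B"
    and f: "f \<in> lin_functionals scl U" and g: "g \<in> lin_functionals scl U"
    and fg: "\<forall>b\<in>B. f b = g b"
  shows "f = g"
proof
  interpret vector_space scl by (rule vs)
  have "f (scl 0 0) = 0 * f 0" "g (scl 0 0) = 0 * g 0"
    using f g subspace_0[OF U] unfolding lin_functionals_def by blast+
  then have f0: "f 0 = 0" and g0: "g 0 = 0" by simp_all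
  have "subspace {x. x \<in> U \<and> f x = g x}"
    unfolding subspace_def using f g U f0 g0
    by (simp add: lin_functionals_def subspace_add subspace_scale subspace_0)
  fix x
  show "f x = g x"
  proof (cases "x \<in> U")
    case True
    then have "x \<in> span B" using B(2) by blast
    then have "x \<in> {x. x \<in> U \<and> f x = g x}"
      by (rule span_induct) (use \<open>subspace {x. x \<in> U \<and> f x = g x}\<close> fg B(1) in auto)
    then show ?thesis by simp
  next
    case False
    then show ?thesis using f g by (simp add: lin_functionals_def)
  qed
qed

lemma card_coordinates_le:
  fixes scl :: "'f::field \<Rightarrow> 'a::ab_group_add \<Rightarrow> 'a"
  assumes vs: "vector_space scl" and U: "module.subspace scl U" and finU: "finite U"
    and B: "B \<subseteq> U" "module.independent scl B"
  shows "card (PiE B (\<lambda>_. UNIV::'f set)) \<le> card U"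
proof (rule card_inj_on_le)
  interpret vector_space scl by (rule vs)
  have finB: "finite B" using B(1) finU finite_subset by blast
  show "finite U" by (rule finU)
  show "(\<lambda>c. \<Sum>b\<in>B. scl (c b) b) ` PiE B (\<lambda>_. UNIV) \<subseteq> U"
    using B(1) U by (auto intro!: subspace_sum subspace_scale)
  show "inj_on (\<lambda>c. \<Sum>b\<in>B. scl (c b) b) (PiE B (\<lambda>_. UNIV))"
  proof (rule inj_onI)
    fix c d assume c: "c \<in> PiE B (\<lambda>_. UNIV)" and d: "d \<in> PiE B (\<lambda>_. UNIV)"
      and eq: "(\<Sum>b\<in>B. scl (c b) b) = (\<Sum>b\<in>B. scl (d b) b)"
    have indep: "\<And>u. (\<Sum>b\<in>B. scl (u b) b) = 0 \<Longrightarrow> \<forall>b\<in>B. u b = 0"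
      using B(2) finB by (simp only: independent_explicit_finite_subsets) blast
    have "\<forall>b\<in>B. c b - d b = 0"
      by (rule indep) (use eq in \<open>simp add: scale_left_diff_distrib sum_subtractf\<close>)
    then show "c = d" using c d by (metis PiE_ext eq_iff_diff_eq_0)
  qed
qed

lemma card_lin_functionals_le:
  fixes scl :: "'f::field \<Rightarrow> 'a::ab_group_add \<Rightarrow> 'a"
  assumes vs: "vector_space scl" and finF: "finite (UNIV::'f set)"
    and U: "module.subspace scl U" and finU: "finite U"
  shows "card (lin_functionals scl U) \<le> card U"
proof -
  interpret vector_space scl by (rule vs)
  obtain B where B: "B \<subseteq> U" "independent B" "U \<subseteq> span B" by (meson basis_exists)
  have "card (lin_functionals scl U) \<le> card (PiE B (\<lambda>_. UNIV::'f set))"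
  proof (rule card_inj_on_le)
    show "finite (PiE B (\<lambda>_. UNIV::'f set))"
      using B(1) finU finF by (intro finite_PiE) (auto intro: finite_subset)
    show "inj_on (\<lambda>f. restrict f B) (lin_functionals scl U)"
    proof (rule inj_onI)
      fix f g assume "f \<in> lin_functionals scl U" "g \<in> lin_functionals scl U"
        and "restrict f B = restrict g B"
      then show "f = g"
        by (intro lin_functionals_eq_if_eq_on_spanning[OF vs U B(1,3)]) (metis restrict_apply')+
    qed
  qed auto
  also have "\<dots> \<le> card U" by (rule card_coordinates_le[OF vs U finU B(1,2)])
  finally show ?thesis .
qed

lemma finite_UNIV_if_fin_dim_vs:
  fixes sc :: "'f::field \<Rightarrow> 'v::ab_group_add \<Rightarrow> 'v"
  assumes fd: "fin_dim_vs sc" and finF: "finite (UNIV::'f set)"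
  shows "finite (UNIV::'v set)"
proof -
  obtain B where vs: "vector_space sc" and B: "finite B" "module.span sc B = UNIV"
    using fd unfolding fin_dim_vs_def by blast
  interpret vector_space sc by (rule vs)
  have "UNIV \<subseteq> (\<lambda>u. \<Sum>v\<in>B. sc (u v) v) ` PiE B (\<lambda>_. UNIV)"
  proof
    fix x :: 'v
    obtain u where "x = (\<Sum>v\<in>B. sc (u v) v)" using span_finite[OF B(1)] B(2) by blast
    also have "\<dots> = (\<Sum>v\<in>B. sc (restrict u B v) v)" by simp
    finally show "x \<in> (\<lambda>u. \<Sum>v\<in>B. sc (u v) v) ` PiE B (\<lambda>_. UNIV)"
      by (intro image_eqI[of _ _ "restrict u B"]) auto
  qed
  moreover have "finite (PiE B (\<lambda>_. UNIV::'f set))" using B(1) finF by (simp add: finite_PiE)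
  ultimately show ?thesis by (meson finite_imageI finite_subset)
qed

section \<open>The dual of a space of forms\<close>

definition fun_scale :: "'f::field \<Rightarrow> ('a \<Rightarrow> 'f) \<Rightarrow> ('a \<Rightarrow> 'f)" where
  "fun_scale a f = (\<lambda>x. a * f x)"

definition form_scale :: "'f::field \<Rightarrow> ('a \<Rightarrow> 'b \<Rightarrow> 'f) \<Rightarrow> ('a \<Rightarrow> 'b \<Rightarrow> 'f)" where
  "form_scale a f = (\<lambda>x y. a * f x y)"

lemma vector_space_fun_scale: "vector_space (fun_scale :: 'f::field \<Rightarrow> ('a \<Rightarrow> 'f) \<Rightarrow> ('a \<Rightarrow> 'f))"
  by unfold_locales (simp_all add: fun_scale_def fun_eq_iff distrib_left distrib_right)

lemma vector_space_form_scale: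
  "vector_space (form_scale :: 'f::field \<Rightarrow> ('a \<Rightarrow> 'b \<Rightarrow> 'f) \<Rightarrow> ('a \<Rightarrow> 'b \<Rightarrow> 'f))"
  by unfold_locales (simp_all add: form_scale_def fun_eq_iff distrib_left distrib_right)

lemma plus_form_eq: "k + k' = (\<lambda>v w. k v w + k' v w)"
  by (simp add: fun_eq_iff)

lemma zero_form_eq: "0 = (\<lambda>v w. 0)"
  by (simp add: fun_eq_iff)

lemma Kdual_eq_lin_functionals: "Kdual K = lin_functionals form_scale K"
  unfolding Kdual_def lin_functionals_def form_scale_def by (simp only: plus_form_eq)

lemma subspace_if_forms_subspace:
  assumes "forms_subspace K"
  shows "module.subspace form_scale K"
proof -
  interpret vector_space form_scale by (rule vector_space_form_scale)
  show ?thesis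
    using assms unfolding subspace_def forms_subspace_def form_scale_def
    by (simp only: plus_form_eq zero_form_eq) blast
qed

lemma Kdual_zero: "(\<lambda>k. 0) \<in> Kdual K"
  by (simp add: Kdual_def)

lemma Kdual_add: "t \<in> Kdual K \<Longrightarrow> s \<in> Kdual K \<Longrightarrow> (\<lambda>k. t k + s k) \<in> Kdual K"
  by (simp add: Kdual_def algebra_simps)

lemma Kdual_neg: "t \<in> Kdual K \<Longrightarrow> (\<lambda>k. - t k) \<in> Kdual K"
  by (simp add: Kdual_def algebra_simps)

lemma Kdual_diff: "t \<in> Kdual K \<Longrightarrow> s \<in> Kdual K \<Longrightarrow> (\<lambda>k. t k - s k) \<in> Kdual K"
  by (simp add: Kdual_def algebra_simps)

lemma omegaK_in_Kdual:
  assumes "forms_subspace K"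
  shows "omegaK K v w \<in> Kdual K"
  using assms by (auto simp: Kdual_def omegaK_def forms_subspace_def)

lemma omegaK_add_right:
  assumes "K \<subseteq> alt_forms sc"
  shows "omegaK K v (w + w') = omegaK K v w + omegaK K v w'"
  using assms unfolding omegaK_def alt_forms_def bilinear_form_def by (auto simp: fun_eq_iff)

lemma omegaK_scale_right:
  assumes "K \<subseteq> alt_forms sc"
  shows "omegaK K v (sc a w) = fun_scale a (omegaK K v w)"
  using assms unfolding omegaK_def fun_scale_def alt_forms_def bilinear_form_def by (auto simp: fun_eq_iff)

lemma subspace_range_omegaK:
  assumes "K \<subseteq> alt_forms sc"
  shows "module.subspace fun_scale (range (omegaK K v))"
proof -
  interpret vector_space "fun_scale :: 'f \<Rightarrow> (('v \<Rightarrow> 'v \<Rightarrow> 'f::field) \<Rightarrow> 'f) \<Rightarrow> _"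
    by (rule vector_space_fun_scale)
  have "omegaK K v 0 = 0"
    using omegaK_add_right[OF assms, of v 0 0] by simp
  then have "0 \<in> range (omegaK K v)" by (metis rangeI)
  then show ?thesis
    unfolding subspace_def
    by (auto simp flip: omegaK_add_right[OF assms] omegaK_scale_right[OF assms])
qed

lemma symplectic_eq_if_eq_on_row:
  assumes "forms_subspace K" "symplectic K" and "k \<in> K" "k' \<in> K"
    and "v \<noteq> 0" and row: "\<forall>w. k v w = k' v w"
  shows "k = k'"
proof -
  define d where "d = (\<lambda>v w. k v w + (-1) * k' v w)"
  have add: "\<forall>k\<in>K. \<forall>k'\<in>K. (\<lambda>v w. k v w + k' v w) \<in> K"
    and scale: "\<forall>a. \<forall>k\<in>K. (\<lambda>v w. a * k v w) \<in> K"
    using assms(1) by (simp_all add: forms_subspace_def)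
  have "d \<in> K" unfolding d_def by (rule add[rule_format, OF \<open>k \<in> K\<close> scale[rule_format, OF \<open>k' \<in> K\<close>]])
  moreover have "\<not> nondegenerate d"
    using row \<open>v \<noteq> 0\<close> by (auto simp: d_def nondegenerate_def)
  ultimately have "d = (\<lambda>v w. 0)" using assms(2) by (auto simp: symplectic_def)
  then have "k v w + (-1) * k' v w = 0" for v w unfolding d_def by meson
  then show ?thesis by (simp add: fun_eq_iff)
qed

lemma card_le_card_range_omegaK:
  fixes K :: "('v::ab_group_add \<Rightarrow> 'v \<Rightarrow> 'f::field) set"
  assumes finF: "finite (UNIV::'f set)" and finV: "finite (UNIV::'v set)"
    and Kalt: "K \<subseteq> alt_forms sc" and Ksub: "forms_subspace K" and symp: "symplectic K"
    and "v \<noteq> 0"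
  shows "card K \<le> card (range (omegaK K v))"
proof -
  let ?W = "range (omegaK K v)"
  interpret vector_space "fun_scale :: 'f \<Rightarrow> (('v \<Rightarrow> 'v \<Rightarrow> 'f) \<Rightarrow> 'f) \<Rightarrow> _"
    by (rule vector_space_fun_scale)
  have W: "subspace ?W" by (rule subspace_range_omegaK[OF Kalt])
  have "finite (UNIV :: (('v \<Rightarrow> 'v \<Rightarrow> 'f) \<Rightarrow> 'f) set)"
    and "finite (UNIV :: ((('v \<Rightarrow> 'v \<Rightarrow> 'f) \<Rightarrow> 'f) \<Rightarrow> 'f) set)"
    using finF finV by (simp_all add: finite_UNIV_fun)
  then have finW: "finite ?W" and finW': "finite (lin_functionals fun_scale ?W)"
    by (meson finite_subset subset_UNIV)+
  define ev where "ev k = (\<lambda>z. if z \<in> ?W then z k else (0::'f))" for k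
  have "card K \<le> card (lin_functionals fun_scale ?W)"
  proof (rule card_inj_on_le)
    show "ev ` K \<subseteq> lin_functionals fun_scale ?W"
      using subspace_add[OF W] subspace_scale[OF W]
      by (auto simp: lin_functionals_def ev_def fun_scale_def)
    show "inj_on ev K"
    proof (rule inj_onI)
      fix k k' assume k: "k \<in> K" and k': "k' \<in> K" and "ev k = ev k'"
      then have "ev k (omegaK K v w) = ev k' (omegaK K v w)" for w by simp
      then have "\<forall>w. k v w = k' v w" using k k' by (simp add: ev_def omegaK_def)
      then show "k = k'" by (rule symplectic_eq_if_eq_on_row[OF Ksub symp k k' \<open>v \<noteq> 0\<close>])
    qed
  qed (rule finW')
  also have "\<dots> \<le> card ?W"
    by (rule card_lin_functionals_le[OF vector_space_fun_scale finF W finW])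
  finally show ?thesis .
qed

lemma range_omegaK_eq_Kdual:
  fixes K :: "('v::ab_group_add \<Rightarrow> 'v \<Rightarrow> 'f::field) set"
  assumes finF: "finite (UNIV::'f set)" and finV: "finite (UNIV::'v set)"
    and Kalt: "K \<subseteq> alt_forms sc" and Ksub: "forms_subspace K" and symp: "symplectic K"
    and "v \<noteq> 0"
  shows "range (omegaK K v) = Kdual K"
proof -
  have "finite (UNIV :: ('v \<Rightarrow> 'v \<Rightarrow> 'f) set)"
    and "finite (UNIV :: (('v \<Rightarrow> 'v \<Rightarrow> 'f) \<Rightarrow> 'f) set)"
    using finF finV by (simp_all add: finite_UNIV_fun)
  then have finK: "finite K" and finKd: "finite (Kdual K)"
    by (meson finite_subset subset_UNIV)+
  have WK: "range (omegaK K v) \<subseteq> Kdual K" using omegaK_in_Kdual[OF Ksub] by auto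
  have "card (Kdual K) \<le> card K"
    unfolding Kdual_eq_lin_functionals
    by (rule card_lin_functionals_le[OF vector_space_form_scale finF subspace_if_forms_subspace[OF Ksub] finK])
  also have "\<dots> \<le> card (range (omegaK K v))"
    by (rule card_le_card_range_omegaK[OF assms])
  finally have "card (range (omegaK K v)) = card (Kdual K)"
    using card_mono[OF finKd WK] by linarith
  then show ?thesis by (rule card_subset_eq[OF finKd WK])
qed

section \<open>The group \<open>H(V,K,\<beta>)\<close>\<close>

lemma heis_carrier: "carrier (heis K \<beta>) = UNIV \<times> Kdual K"
  by (simp add: heis_def)

lemma heis_mult: "(v, t) \<otimes>\<^bsub>heis K \<beta>\<^esub> (v', t') = (v + v', \<lambda>k. t k + t' k + \<beta> v v' k)"
  by (simp add: heis_def)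

lemma heis_one: "\<one>\<^bsub>heis K \<beta>\<^esub> = (0, \<lambda>k. 0)"
  by (simp add: heis_def)

context
  fixes sc :: "'f::field \<Rightarrow> 'v::ab_group_add \<Rightarrow> 'v"
    and K :: "('v \<Rightarrow> 'v \<Rightarrow> 'f) set"
    and \<beta> :: "'v \<Rightarrow> 'v \<Rightarrow> (('v \<Rightarrow> 'v \<Rightarrow> 'f) \<Rightarrow> 'f)"
  assumes \<beta>: "bilinear_to_dual sc K \<beta>"
begin

lemma bilinear_to_dual_in_Kdual: "\<beta> v w \<in> Kdual K"
  using \<beta> by (simp add: bilinear_to_dual_def)

lemma bilinear_to_dual_add_left: "\<beta> (x + y) z k = \<beta> x z k + \<beta> y z k"
  using \<beta> by (simp add: bilinear_to_dual_def)

lemma bilinear_to_dual_add_right: "\<beta> x (y + z) k = \<beta> x y k + \<beta> x z k"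
  using \<beta> by (simp add: bilinear_to_dual_def)

lemma bilinear_to_dual_zero_left: "\<beta> 0 z k = 0"
  using bilinear_to_dual_add_left[of 0 0 z k] by (simp only: add_0_left add_cancel_right_right)

lemma bilinear_to_dual_zero_right: "\<beta> z 0 k = 0"
  using bilinear_to_dual_add_right[of z 0 0 k] by (simp only: add_0_left add_cancel_right_right)

lemma bilinear_to_dual_minus_left: "\<beta> (- x) y k = - \<beta> x y k"
  using bilinear_to_dual_add_left[of "- x" x y k] bilinear_to_dual_zero_left[of y k]
  by (simp add: eq_neg_iff_add_eq_0)

lemma group_heis: "group (heis K \<beta>)"
proof (rule groupI)
  fix x y assume "x \<in> carrier (heis K \<beta>)" "y \<in> carrier (heis K \<beta>)"
  then show "x \<otimes>\<^bsub>heis K \<beta>\<^esub> y \<in> carrier (heis K \<beta>)"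
    by (cases x, cases y) (auto simp: heis_carrier heis_mult intro!: Kdual_add bilinear_to_dual_in_Kdual)
next
  show "\<one>\<^bsub>heis K \<beta>\<^esub> \<in> carrier (heis K \<beta>)"
    by (simp add: heis_carrier heis_one Kdual_zero)
next
  fix x y z
  show "x \<otimes>\<^bsub>heis K \<beta>\<^esub> y \<otimes>\<^bsub>heis K \<beta>\<^esub> z = x \<otimes>\<^bsub>heis K \<beta>\<^esub> (y \<otimes>\<^bsub>heis K \<beta>\<^esub> z)"
    by (cases x, cases y, cases z)
      (simp add: heis_mult bilinear_to_dual_add_left bilinear_to_dual_add_right fun_eq_iff add_ac)
next
  fix x
  show "\<one>\<^bsub>heis K \<beta>\<^esub> \<otimes>\<^bsub>heis K \<beta>\<^esub> x = x"
    by (cases x) (simp add: heis_mult heis_one bilinear_to_dual_zero_left)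
next
  fix x assume "x \<in> carrier (heis K \<beta>)"
  then obtain v t where x: "x = (v, t)" and t: "t \<in> Kdual K" by (auto simp: heis_carrier)
  let ?y = "(- v, \<lambda>k. \<beta> v v k - t k)"
  have "?y \<in> carrier (heis K \<beta>)"
    using t by (simp add: heis_carrier Kdual_diff bilinear_to_dual_in_Kdual)
  moreover have "?y \<otimes>\<^bsub>heis K \<beta>\<^esub> x = \<one>\<^bsub>heis K \<beta>\<^esub>"
    by (simp add: x heis_mult heis_one bilinear_to_dual_minus_left)
  ultimately show "\<exists>y\<in>carrier (heis K \<beta>). y \<otimes>\<^bsub>heis K \<beta>\<^esub> x = \<one>\<^bsub>heis K \<beta>\<^esub>" by blast
qed

lemma heis_inv_central:
  assumes t: "t \<in> Kdual K"
  shows "inv\<^bsub>heis K \<beta>\<^esub> (0, t) = (0, \<lambda>k. - t k)"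
proof (rule group.inv_equality[OF group_heis])
  show "(0, \<lambda>k. - t k) \<otimes>\<^bsub>heis K \<beta>\<^esub> (0, t) = \<one>\<^bsub>heis K \<beta>\<^esub>"
    by (simp add: heis_mult heis_one bilinear_to_dual_zero_left)
qed (simp_all add: heis_carrier t Kdual_neg)

lemma heis_commutation:
  assumes om: "\<forall>v w. omegaK K v w = (\<lambda>k. \<beta> v w k - \<beta> w v k)"
  shows "(v, t) \<otimes>\<^bsub>heis K \<beta>\<^esub> (w, \<lambda>k. 0)
    = ((w, \<lambda>k. 0) \<otimes>\<^bsub>heis K \<beta>\<^esub> (v, t)) \<otimes>\<^bsub>heis K \<beta>\<^esub> (0, omegaK K v w)"
  by (simp add: heis_mult om bilinear_to_dual_zero_right fun_eq_iff add.commute)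

end

lemma dual_character_zero:
  assumes "dual_character K \<xi>"
  shows "\<xi> (\<lambda>k. 0) = 1"
proof -
  have "\<xi> (\<lambda>k. 0) = \<xi> (\<lambda>k. 0) * \<xi> (\<lambda>k. 0)" and "\<xi> (\<lambda>k. 0) \<noteq> 0"
    using assms Kdual_zero[of K] unfolding dual_character_def by fastforce+
  then show ?thesis by simp
qed

lemma dual_character_neg:
  assumes "dual_character K \<xi>" and t: "t \<in> Kdual K"
  shows "\<xi> (\<lambda>k. - t k) * \<xi> t = 1"
proof -
  have hom: "\<forall>t\<in>Kdual K. \<forall>s\<in>Kdual K. \<xi> (\<lambda>k. t k + s k) = \<xi> t * \<xi> s"
    using assms(1) unfolding dual_character_def by blast
  have "\<xi> (\<lambda>k. - t k + t k) = \<xi> (\<lambda>k. - t k) * \<xi> t"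
    using hom[rule_format, OF Kdual_neg[OF t] t] by simp
  then show ?thesis using dual_character_zero[OF assms(1)] by simp
qed

section \<open>Complex matrix representations of a group\<close>

lemma matrix_mul_sum_right: "(A::'a::comm_semiring_1^'n^'m) ** sum f S = (\<Sum>x\<in>S. A ** f x)"
  by (simp add: vec_eq_iff matrix_matrix_mult_def sum_component sum_distrib_left sum.swap[of _ S])

lemma matrix_mul_sum_left: "sum f S ** (A::'a::comm_semiring_1^'n^'m) = (\<Sum>x\<in>S. f x ** A)"
  by (simp add: vec_eq_iff matrix_matrix_mult_def sum_component sum_distrib_right sum.swap[of _ S])

lemma trace_mat: "trace (mat c :: 'a::semiring_1^'n^'n) = of_nat CARD('n) * c"
  by (simp add: trace_def mat_def)

lemma trace_mul_mat: "trace ((M::'a::comm_semiring_1^'n^'n) ** mat c) = c * trace M"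
  by (simp add: trace_def matrix_matrix_mult_def mat_def sum_distrib_left mult.commute if_distrib
      cong: if_cong)

lemma matrix_unit_sandwich_entry:
  fixes S :: "'a::comm_semiring_1^'m^'m" and R :: "'a^'n^'n"
  shows "(S ** (\<chi> i j. if i = a \<and> j = b then 1 else 0) ** R) $ a $ b = S $ a $ a * R $ b $ b"
proof -
  let ?E = "(\<chi> i j. if i = a \<and> j = b then 1 else 0) :: 'a^'n^'m"
  have SE: "(S ** ?E) $ a $ k = (if k = b then S $ a $ a else 0)" for k
    by (simp add: matrix_matrix_mult_def if_distrib[of "(*) _"] cong: if_cong)
  show ?thesis
    by (simp add: matrix_matrix_mult_def[of "S ** ?E" R] SE if_distrib[of "\<lambda>x. x * _"] cong: if_cong)
qed

lemma representation_one:
  fixes G (structure)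
  assumes "group G" and rep: "representation G \<rho>"
  shows "\<rho> \<one>\<^bsub>G\<^esub> = mat 1"
proof -
  interpret group G by (rule assms(1))
  have "invertible (\<rho> \<one>)" using rep by (simp add: representation_def)
  then obtain B where B: "B ** \<rho> \<one> = mat 1" by (auto simp: invertible_left_inverse)
  have idem: "\<rho> \<one> ** \<rho> \<one> = \<rho> \<one>" using rep by (metis one_closed l_one representation_def)
  have "\<rho> \<one> = (B ** \<rho> \<one>) ** \<rho> \<one>" using B by (simp add: matrix_mul_lid)
  also have "\<dots> = B ** (\<rho> \<one> ** \<rho> \<one>)" by (simp add: matrix_mul_assoc)
  also have "\<dots> = mat 1" using idem B by simp
  finally show ?thesis .
qed

lemma representation_inv:
  fixes G (structure)
  assumes "group G" and rep: "representation G \<rho>" and g: "g \<in> carrier G"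
  shows "\<rho> (inv\<^bsub>G\<^esub> g) ** \<rho> g = mat 1" and "\<rho> g ** \<rho> (inv\<^bsub>G\<^esub> g) = mat 1"
proof -
  interpret group G by (rule assms(1))
  show "\<rho> (inv g) ** \<rho> g = mat 1" "\<rho> g ** \<rho> (inv g) = mat 1"
    using rep g representation_one[OF assms(1,2)] by (metis representation_def inv_closed l_inv r_inv)+
qed

lemma intertwiner_inj:
  fixes A :: "complex^'n^'m" and \<rho> :: "'g \<Rightarrow> complex^'n^'n" and \<sigma> :: "'g \<Rightarrow> complex^'m^'m"
  assumes irr: "irreducible_rep G \<rho>" and "A \<noteq> 0"
    and int: "\<forall>g\<in>carrier G. \<sigma> g ** A = A ** \<rho> g"
  shows "inj ((*v) A)"
proof -
  have "\<rho> g *v x \<in> {x. A *v x = 0}" if "g \<in> carrier G" "A *v x = 0" for g x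
  proof -
    have "A *v (\<rho> g *v x) = \<sigma> g *v (A *v x)"
      using int that(1) by (simp add: matrix_vector_mul_assoc)
    then show ?thesis using that(2) by simp
  qed
  then have "{x. A *v x = 0} = {0} \<or> {x. A *v x = 0} = UNIV"
    using irr vec.subspace_kernel unfolding irreducible_rep_def by blast
  moreover have "{x. A *v x = 0} \<noteq> UNIV"
    using \<open>A \<noteq> 0\<close> by (metis (mono_tags) UNIV_I mem_Collect_eq matrix_eq matrix_vector_mult_0)
  ultimately show ?thesis unfolding vec.inj_iff_eq_0 by blast
qed

lemma intertwiner_surj:
  fixes A :: "complex^'n^'m" and \<rho> :: "'g \<Rightarrow> complex^'n^'n" and \<sigma> :: "'g \<Rightarrow> complex^'m^'m"
  assumes irr: "irreducible_rep G \<sigma>" and "A \<noteq> 0"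
    and int: "\<forall>g\<in>carrier G. \<sigma> g ** A = A ** \<rho> g"
  shows "surj ((*v) A)"
proof -
  have "\<sigma> g *v (A *v x) \<in> range ((*v) A)" if "g \<in> carrier G" for g x
  proof -
    have "\<sigma> g *v (A *v x) = A *v (\<rho> g *v x)"
      using int that by (simp add: matrix_vector_mul_assoc)
    then show ?thesis by simp
  qed
  moreover have "vec.subspace (range ((*v) A))"
    using vec.subspace_image[OF vec.subspace_UNIV] by blast
  ultimately have "range ((*v) A) = {0} \<or> range ((*v) A) = UNIV"
    using irr unfolding irreducible_rep_def by blast
  moreover have "range ((*v) A) \<noteq> {0}"
    using \<open>A \<noteq> 0\<close> by (metis (mono_tags) matrix_eq matrix_vector_mult_0 rangeI singletonD)
  ultimately show ?thesis by blast
qed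

lemma isomorphic_reps_if_nonzero_intertwiner:
  fixes A :: "complex^'n^'m" and \<rho> :: "'g \<Rightarrow> complex^'n^'n" and \<sigma> :: "'g \<Rightarrow> complex^'m^'m"
  assumes "irreducible_rep G \<rho>" "irreducible_rep G \<sigma>" and "A \<noteq> 0"
    and int: "\<forall>g\<in>carrier G. \<sigma> g ** A = A ** \<rho> g"
  shows "isomorphic_reps G \<rho> \<sigma>"
proof -
  obtain B where B: "B ** A = mat 1"
    using intertwiner_inj[OF assms(1,3) int] matrix_left_invertible_injective by blast
  obtain C where C: "A ** C = mat 1"
    using intertwiner_surj[OF assms(2,3) int] matrix_right_invertible_surjective by blast
  have "B = C" by (metis B C matrix_mul_assoc matrix_mul_lid matrix_mul_rid)
  then show ?thesis unfolding isomorphic_reps_def using B C int by metis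
qed

lemma sum_conj_intertwines:
  fixes G (structure) and \<rho> :: "'g \<Rightarrow> complex^'n^'n" and \<sigma> :: "'g \<Rightarrow> complex^'m^'m"
  assumes "group G" "representation G \<rho>" "representation G \<sigma>" and h: "h \<in> carrier G"
  shows "\<sigma> h ** (\<Sum>g\<in>carrier G. \<sigma> g ** X ** \<rho> (inv\<^bsub>G\<^esub> g))
       = (\<Sum>g\<in>carrier G. \<sigma> g ** X ** \<rho> (inv\<^bsub>G\<^esub> g)) ** \<rho> h"
proof -
  interpret group G by (rule assms(1))
  have hom\<rho>: "\<rho> (x \<otimes> y) = \<rho> x ** \<rho> y" and hom\<sigma>: "\<sigma> (x \<otimes> y) = \<sigma> x ** \<sigma> y"
    if "x \<in> carrier G" "y \<in> carrier G" for x y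
    using assms(2,3) that by (simp_all add: representation_def)
  have shift: "bij_betw (\<lambda>g. inv h \<otimes> g) (carrier G) (carrier G)"
    by (rule bij_betwI[where g="\<lambda>g. h \<otimes> g"]) (auto simp: h m_assoc[symmetric])
  have "\<sigma> h ** (\<Sum>g\<in>carrier G. \<sigma> g ** X ** \<rho> (inv g))
      = (\<Sum>g\<in>carrier G. \<sigma> (h \<otimes> g) ** X ** \<rho> (inv g))"
    by (simp add: matrix_mul_sum_right hom\<sigma> h matrix_mul_assoc)
  also have "\<dots> = (\<Sum>g\<in>carrier G. \<sigma> (h \<otimes> (inv h \<otimes> g)) ** X ** \<rho> (inv (inv h \<otimes> g)))"
    by (rule sum.reindex_bij_betw[OF shift, symmetric])
  also have "\<dots> = (\<Sum>g\<in>carrier G. \<sigma> g ** X ** \<rho> (inv g) ** \<rho> h)"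
    by (rule sum.cong) (simp_all add: h m_assoc[symmetric] inv_mult_group hom\<rho> matrix_mul_assoc)
  also have "\<dots> = (\<Sum>g\<in>carrier G. \<sigma> g ** X ** \<rho> (inv g)) ** \<rho> h"
    by (simp add: matrix_mul_sum_left)
  finally show ?thesis .
qed

lemma sum_trace_mul_trace_inv_eq_0:
  fixes \<rho> :: "'g \<Rightarrow> complex^'n^'n" and \<sigma> :: "'g \<Rightarrow> complex^'m^'m"
  assumes "group G" and irr: "irreducible_rep G \<rho>" "irreducible_rep G \<sigma>"
    and not_iso: "\<not> isomorphic_reps G \<rho> \<sigma>"
  shows "(\<Sum>g\<in>carrier G. trace (\<sigma> g) * trace (\<rho> (inv\<^bsub>G\<^esub> g))) = 0"
proof -
  have reps: "representation G \<rho>" "representation G \<sigma>"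
    using irr by (simp_all add: irreducible_rep_def)
  have avg0: "(\<Sum>g\<in>carrier G. \<sigma> g ** X ** \<rho> (inv\<^bsub>G\<^esub> g)) = 0" for X :: "complex^'n^'m"
    using isomorphic_reps_if_nonzero_intertwiner[OF irr] sum_conj_intertwines[OF assms(1) reps]
      not_iso by blast
  have entry: "(\<Sum>g\<in>carrier G. \<sigma> g $ a $ a * \<rho> (inv\<^bsub>G\<^esub> g) $ b $ b) = 0" for a b
    using arg_cong[OF avg0[of "\<chi> i j. if i = a \<and> j = b then 1 else 0"], of "\<lambda>M. M $ a $ b"]
    by (simp add: sum_component matrix_unit_sandwich_entry)
  have "(\<Sum>g\<in>carrier G. trace (\<sigma> g) * trace (\<rho> (inv\<^bsub>G\<^esub> g)))
      = (\<Sum>a\<in>UNIV. \<Sum>b\<in>UNIV. \<Sum>g\<in>carrier G. \<sigma> g $ a $ a * \<rho> (inv\<^bsub>G\<^esub> g) $ b $ b)"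
    by (simp add: trace_def sum_product sum.swap[of _ "carrier G"] sum.swap[of _ "carrier G" UNIV])
  also have "\<dots> = 0" by (simp add: entry)
  finally show ?thesis .
qed

section \<open>Characters of \<open>H(V,K,\<beta>)\<close> with a nontrivial central character\<close>

lemma trace_heis_rep_off_centre:
  fixes sc :: "'f::field \<Rightarrow> 'v::ab_group_add \<Rightarrow> 'v"
    and \<sigma> :: "'v \<times> (('v \<Rightarrow> 'v \<Rightarrow> 'f) \<Rightarrow> 'f) \<Rightarrow> complex^'m^'m"
  assumes \<beta>: "bilinear_to_dual sc K \<beta>"
    and om: "\<forall>v w. omegaK K v w = (\<lambda>k. \<beta> v w k - \<beta> w v k)"
    and onto: "Kdual K \<subseteq> range (omegaK K v)"
    and \<xi>: "nontrivial_dual_character K \<xi>"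
    and rep: "representation (heis K \<beta>) \<sigma>" and cc: "has_central_character K \<sigma> \<xi>"
    and t: "t \<in> Kdual K"
  shows "trace (\<sigma> (v, t)) = 0"
proof -
  let ?H = "heis K \<beta>"
  interpret group ?H by (rule group_heis[OF \<beta>])
  obtain w where w: "omegaK K v w \<in> Kdual K" "\<xi> (omegaK K v w) \<noteq> 1"
    using \<xi> onto by (auto simp: nontrivial_dual_character_def)
  define g where "g = (v, t)"
  define h where "h = (w, (\<lambda>k. 0) :: ('v \<Rightarrow> 'v \<Rightarrow> 'f) \<Rightarrow> 'f)"
  define z where "z = ((0::'v), omegaK K v w)"
  have carrier: "g \<in> carrier ?H" "h \<in> carrier ?H" "z \<in> carrier ?H"
    using t w(1) by (simp_all add: g_def h_def z_def heis_carrier Kdual_zero)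
  have hom: "\<sigma> (x \<otimes>\<^bsub>?H\<^esub> y) = \<sigma> x ** \<sigma> y" if "x \<in> carrier ?H" "y \<in> carrier ?H" for x y
    using rep that by (simp add: representation_def)
  have "\<sigma> g ** \<sigma> h = \<sigma> (g \<otimes>\<^bsub>?H\<^esub> h)" by (rule hom[OF carrier(1,2), symmetric])
  also have "\<dots> = \<sigma> ((h \<otimes>\<^bsub>?H\<^esub> g) \<otimes>\<^bsub>?H\<^esub> z)"
    unfolding g_def h_def z_def by (rule arg_cong[where f = \<sigma>], rule heis_commutation[OF \<beta> om])
  also have "\<dots> = \<sigma> h ** \<sigma> g ** \<sigma> z" using hom carrier by simp
  also have "\<dots> = \<sigma> h ** \<sigma> g ** mat (\<xi> (omegaK K v w))"
    using cc w(1) by (simp add: z_def has_central_character_def)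
  finally have comm: "\<sigma> g ** \<sigma> h = \<sigma> h ** \<sigma> g ** mat (\<xi> (omegaK K v w))" .
  have "trace (\<sigma> g) = trace ((\<sigma> g ** \<sigma> h) ** \<sigma> (inv\<^bsub>?H\<^esub> h))"
    using representation_inv(2)[OF group_heis[OF \<beta>] rep carrier(2)]
    by (metis matrix_mul_assoc matrix_mul_rid)
  also have "\<dots> = trace (\<sigma> (inv\<^bsub>?H\<^esub> h) ** (\<sigma> g ** \<sigma> h))"
    by (rule trace_mul_sym)
  also have "\<dots> = trace ((\<sigma> (inv\<^bsub>?H\<^esub> h) ** \<sigma> h) ** (\<sigma> g ** mat (\<xi> (omegaK K v w))))"
    by (simp add: comm matrix_mul_assoc)
  also have "\<dots> = \<xi> (omegaK K v w) * trace (\<sigma> g)"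
    using representation_inv(1)[OF group_heis[OF \<beta>] rep carrier(2)]
    by (simp add: trace_mul_mat matrix_mul_lid)
  finally have "(1 - \<xi> (omegaK K v w)) * trace (\<sigma> g) = 0" by (simp add: algebra_simps)
  then show ?thesis using w(2) by (simp add: g_def)
qed

lemma sum_trace_mul_trace_inv_heis:
  fixes sc :: "'f::field \<Rightarrow> 'v::ab_group_add \<Rightarrow> 'v"
    and \<rho> :: "'v \<times> (('v \<Rightarrow> 'v \<Rightarrow> 'f) \<Rightarrow> 'f) \<Rightarrow> complex^'n^'n"
    and \<sigma> :: "'v \<times> (('v \<Rightarrow> 'v \<Rightarrow> 'f) \<Rightarrow> 'f) \<Rightarrow> complex^'m^'m"
  assumes finV: "finite (UNIV::'v set)"
    and \<beta>: "bilinear_to_dual sc K \<beta>"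
    and om: "\<forall>v w. omegaK K v w = (\<lambda>k. \<beta> v w k - \<beta> w v k)"
    and onto: "\<forall>v. v \<noteq> 0 \<longrightarrow> Kdual K \<subseteq> range (omegaK K v)"
    and \<xi>: "nontrivial_dual_character K \<xi>"
    and rep: "representation (heis K \<beta>) \<rho>" "representation (heis K \<beta>) \<sigma>"
    and cc: "has_central_character K \<rho> \<xi>" "has_central_character K \<sigma> \<xi>"
  shows "(\<Sum>g\<in>carrier (heis K \<beta>). trace (\<sigma> g) * trace (\<rho> (inv\<^bsub>heis K \<beta>\<^esub> g)))
       = of_nat (card (Kdual K) * CARD('m) * CARD('n))"
proof -
  define F where "F g = trace (\<sigma> g) * trace (\<rho> (inv\<^bsub>heis K \<beta>\<^esub> g))" for g
  have central: "F (0, t) = of_nat CARD('m) * of_nat CARD('n)" if t: "t \<in> Kdual K" for t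
  proof -
    have "F (0, t) = of_nat CARD('m) * of_nat CARD('n) * (\<xi> (\<lambda>k. - t k) * \<xi> t)"
      using cc t Kdual_neg[OF t] heis_inv_central[OF \<beta> t]
      by (simp add: F_def has_central_character_def trace_mat)
    then show ?thesis
      using dual_character_neg[OF _ t] \<xi> by (simp add: nontrivial_dual_character_def)
  qed
  have "(\<Sum>g\<in>carrier (heis K \<beta>). F g) = (\<Sum>v\<in>UNIV. \<Sum>t\<in>Kdual K. F (v, t))"
    by (simp add: heis_carrier sum.cartesian_product)
  also have "\<dots> = (\<Sum>v\<in>{0}. \<Sum>t\<in>Kdual K. F (v, t))"
    using finV onto trace_heis_rep_off_centre[OF \<beta> om _ \<xi> rep(2) cc(2)]
    by (intro sum.mono_neutral_right) (auto simp: F_def intro!: sum.neutral)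
  also have "\<dots> = of_nat (card (Kdual K) * CARD('m) * CARD('n))"
    by (simp add: central)
  finally show ?thesis by (simp add: F_def)
qed

theorem corollary2p12:
  fixes p :: nat
    and sc :: "'f::field \<Rightarrow> 'v::ab_group_add \<Rightarrow> 'v"
    and K :: "('v \<Rightarrow> 'v \<Rightarrow> 'f) set"
    and \<beta> :: "'v \<Rightarrow> 'v \<Rightarrow> (('v \<Rightarrow> 'v \<Rightarrow> 'f) \<Rightarrow> 'f)"
    and \<xi> :: "(('v \<Rightarrow> 'v \<Rightarrow> 'f) \<Rightarrow> 'f) \<Rightarrow> complex"
    and \<rho> :: "'v \<times> (('v \<Rightarrow> 'v \<Rightarrow> 'f) \<Rightarrow> 'f) \<Rightarrow> complex^'n^'n"
    and \<sigma> :: "'v \<times> (('v \<Rightarrow> 'v \<Rightarrow> 'f) \<Rightarrow> 'f) \<Rightarrow> complex^'m^'m"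
  assumes "prime p"
    and "CARD('f) = p"
    and "fin_dim_vs sc"
    and "K \<subseteq> alt_forms sc"
    and "forms_subspace K"
    and "symplectic K"
    and "bilinear_to_dual sc K \<beta>"
    and "\<forall>v w. omegaK K v w = (\<lambda>k. \<beta> v w k - \<beta> w v k)"
    and "nontrivial_dual_character K \<xi>"
    and "irreducible_rep (heis K \<beta>) \<rho>"
    and "irreducible_rep (heis K \<beta>) \<sigma>"
    and "has_central_character K \<rho> \<xi>"
    and "has_central_character K \<sigma> \<xi>"
  shows "isomorphic_reps (heis K \<beta>) \<rho> \<sigma>"
proof (rule ccontr)
  assume not_iso: "\<not> isomorphic_reps (heis K \<beta>) \<rho> \<sigma>"
  have finF: "finite (UNIV::'f set)"
    using assms(1,2) prime_gt_0_nat by (intro card_ge_0_finite) simp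
  have finV: "finite (UNIV::'v set)" by (rule finite_UNIV_if_fin_dim_vs[OF assms(3) finF])
  have "finite (UNIV :: (('v \<Rightarrow> 'v \<Rightarrow> 'f) \<Rightarrow> 'f) set)"
    using finF finV by (simp add: finite_UNIV_fun)
  then have "finite (Kdual K)" by (rule finite_subset[OF subset_UNIV])
  then have "card (Kdual K) \<noteq> 0" using Kdual_zero[of K] by auto
  moreover have "\<forall>v. v \<noteq> 0 \<longrightarrow> Kdual K \<subseteq> range (omegaK K v)"
    using range_omegaK_eq_Kdual[OF finF finV assms(4-6)] by blast
  then have "(\<Sum>g\<in>carrier (heis K \<beta>). trace (\<sigma> g) * trace (\<rho> (inv\<^bsub>heis K \<beta>\<^esub> g)))
      = of_nat (card (Kdual K) * CARD('m) * CARD('n))"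
    using assms(10,11) by (intro sum_trace_mul_trace_inv_heis[OF finV assms(7,8) _ assms(9) _ _ assms(12,13)])
      (simp_all add: irreducible_rep_def)
  moreover have "(\<Sum>g\<in>carrier (heis K \<beta>). trace (\<sigma> g) * trace (\<rho> (inv\<^bsub>heis K \<beta>\<^esub> g))) = 0"
    by (rule sum_trace_mul_trace_inv_eq_0[OF group_heis[OF assms(7)] assms(10,11) not_iso])
  ultimately show False by simp
qed

end
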